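(* Let $1/2<H<1$, let $Z$ be a continuous fractional Brownian motion with Hurst parameter $H$, let $\alpha>0$, $a_t:=H\mathrm{e}^{\alpha t/H}/\alpha$, and $Y^{(\alpha)}_t:=\int_0^t\mathrm{e}^{-\alpha s}\,dZ_{a_s}$ (pathwise Riemann–Stieltjes integral), $t\ge0$. Then the increments of $Y^{(\alpha)}$ are positively correlated, i.e. $\mathbf{E}\big((Y^{(\alpha)}_{t_2}-Y^{(\alpha)}_{t_1})(Y^{(\alpha)}_{s_2}-Y^{(\alpha)}_{s_1})\big)>0$ for all $t_2>t_1\ge0$, $s_2>s_1\ge0$. The increment process $I_Y:=\{Y^{(\alpha)}_{n+1}-Y^{(\alpha)}_n:n=0,1,\dots\}$ is stationary and short range dependent.
   Context: A fractional Brownian motion with Hurst parameter $H$ is a centered Gaussian process on $[0,\infty)$ with covariance $\frac12(t^{2H}+s^{2H}-|t-s|^{2H})$. A stationary second order mean-zero sequence $X=\{X_n\}$ with $\rho_X(n)=\mathbf{E}(X_iX_{i+n})$ is short range dependent if $\lim_{k\to\infty}\sum_{n=0}^k\rho_X(n)$ exists. *)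

theory Defs
  imports "HOL-Probability.Probability"
begin

definition has_RS_integral ::
  "(real \<Rightarrow> real) \<Rightarrow> (real \<Rightarrow> real) \<Rightarrow> real \<Rightarrow> real \<Rightarrow> real \<Rightarrow> bool" where
  "has_RS_integral f g a b I \<longleftrightarrow>
     (\<forall>e>0. \<exists>d>0. \<forall>(n::nat) (x::nat \<Rightarrow> real) (\<xi>::nat \<Rightarrow> real).
        x 0 = a \<and> x n = b \<and>
        (\<forall>i<n. x i \<le> \<xi> i \<and> \<xi> i \<le> x (Suc i) \<and> x (Suc i) - x i < d)
        \<longrightarrow> \<bar>(\<Sum>i<n. f (\<xi> i) * (g (x (Suc i)) - g (x i))) - I\<bar> < e)"

definition RS_integral ::
  "(real \<Rightarrow> real) \<Rightarrow> (real \<Rightarrow> real) \<Rightarrow> real \<Rightarrow> real \<Rightarrow> real" where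
  "RS_integral f g a b = (THE I. has_RS_integral f g a b I)"

definition gaussian_process :: "'a measure \<Rightarrow> (real \<Rightarrow> 'a \<Rightarrow> real) \<Rightarrow> bool" where
  "gaussian_process M Z \<longleftrightarrow>
     (\<forall>(n::nat) (t::nat \<Rightarrow> real) (c::nat \<Rightarrow> real). (\<forall>i<n. t i \<ge> 0) \<longrightarrow>
        (\<exists>\<mu> \<sigma>. (\<sigma> > 0 \<and> distributed M lborel (\<lambda>\<omega>. \<Sum>i<n. c i * Z (t i) \<omega>) (normal_density \<mu> \<sigma>))
              \<or> (AE \<omega> in M. (\<Sum>i<n. c i * Z (t i) \<omega>) = \<mu>)))"

definition continuous_fBm :: "'a measure \<Rightarrow> real \<Rightarrow> (real \<Rightarrow> 'a \<Rightarrow> real) \<Rightarrow> bool" where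
  "continuous_fBm M H Z \<longleftrightarrow>
     prob_space M \<and>
     (\<forall>t\<ge>0. Z t \<in> borel_measurable M) \<and>
     gaussian_process M Z \<and>
     (\<forall>t\<ge>0. integrable M (Z t) \<and> (\<integral>\<omega>. Z t \<omega> \<partial>M) = 0) \<and>
     (\<forall>s\<ge>0. \<forall>t\<ge>0. integrable M (\<lambda>\<omega>. Z t \<omega> * Z s \<omega>) \<and>
        (\<integral>\<omega>. Z t \<omega> * Z s \<omega> \<partial>M) = (t powr (2*H) + s powr (2*H) - \<bar>t - s\<bar> powr (2*H)) / 2) \<and>
     (\<forall>\<omega>\<in>space M. continuous_on {0..} (\<lambda>t. Z t \<omega>))"

end

(*
  Integrating by parts, Y w - Y u is the pathwise limit of Riemann--Stieltjes sums over uniform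
  grids, which are finite combinations of increments of Z o a.  Their covariances are double sums
  of the fBm increment kernel against positive exponential weights.  For 2H > 1 the kernel is
  nonnegative (convexity of |x| powr 2H) and it telescopes, so every such covariance lies between
  e^(-alpha (w + w')) K and e^(-alpha u') K, where K is the kernel of the two whole intervals.
  Gaussian fourth moments bound the products of grid sums uniformly in L2, so covariances pass to
  the limit: this gives positive correlation.  Stationarity comes from a (t + s) = e^(alpha s/H) a t
  and the 2H-homogeneity of the kernel, and the upper bound decays geometrically, at the rate
  e^(alpha (H - 1) / H) per unit lag, which gives short range dependence.
*)
theory Submission
  imports Defs
begin

section \<open>Riemann--Stieltjes integrals against an exponential weight\<close>

lemma has_integral_exp_neg_scaled:
  fixes \<alpha> a b :: real
  assumes "a \<le> b"
  shows "((\<lambda>s. \<alpha> * exp (- \<alpha> * s)) has_integral (exp (- \<alpha> * a) - exp (- \<alpha> * b))) {a..b}"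
proof -
  have "((\<lambda>s. \<alpha> * exp (- \<alpha> * s)) has_integral
      ((\<lambda>s. - exp (- \<alpha> * s)) b - (\<lambda>s. - exp (- \<alpha> * s)) a)) {a..b}"
    by (rule fundamental_theorem_of_calculus[OF assms])
      (auto intro!: derivative_eq_intros simp: has_real_derivative_iff_has_vector_derivative[symmetric])
  then show ?thesis by simp
qed

text \<open>Integration by parts: the Riemann--Stieltjes integral of \<open>exp (- \<alpha> * s)\<close> against a
  continuous \<open>g\<close> over \<open>[u, w]\<close>.\<close>
definition RS_exp_by_parts :: "real \<Rightarrow> (real \<Rightarrow> real) \<Rightarrow> real \<Rightarrow> real \<Rightarrow> real" where
  "RS_exp_by_parts \<alpha> g u w = exp (- \<alpha> * w) * g w - exp (- \<alpha> * u) * g u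
      + integral {u..w} (\<lambda>s. \<alpha> * exp (- \<alpha> * s) * g s)"

lemma RS_exp_by_parts_add:
  assumes "u \<le> v" "v \<le> w" "continuous_on {u..w} g"
  shows "RS_exp_by_parts \<alpha> g u v + RS_exp_by_parts \<alpha> g v w = RS_exp_by_parts \<alpha> g u w"
proof -
  have "continuous_on {u..w} (\<lambda>s. \<alpha> * exp (- \<alpha> * s) * g s)"
    using assms(3) by (intro continuous_intros) auto
  then have "integral {u..v} (\<lambda>s. \<alpha> * exp (- \<alpha> * s) * g s) + integral {v..w} (\<lambda>s. \<alpha> * exp (- \<alpha> * s) * g s)
      = integral {u..w} (\<lambda>s. \<alpha> * exp (- \<alpha> * s) * g s)"
    using Henstock_Kurzweil_Integration.integral_combine[OF assms(1,2) integrable_continuous_real] by blast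
  then show ?thesis unfolding RS_exp_by_parts_def by linarith
qed

lemma partition_mono:
  fixes x :: "nat \<Rightarrow> real"
  assumes "\<And>i. i < n \<Longrightarrow> x i \<le> x (Suc i)" "i \<le> j" "j \<le> n"
  shows "x i \<le> x j"
  by (rule lift_Suc_mono_le_ivl[of "{..<n}"]) (use assms in auto)

lemma RS_exp_by_parts_partition:
  fixes x :: "nat \<Rightarrow> real"
  assumes mono: "\<And>i. i < n \<Longrightarrow> x i \<le> x (Suc i)" and g: "continuous_on {x 0..x n} g"
  shows "(\<Sum>i<n. RS_exp_by_parts \<alpha> g (x i) (x (Suc i))) = RS_exp_by_parts \<alpha> g (x 0) (x n)"
proof -
  have "(\<Sum>i<k. RS_exp_by_parts \<alpha> g (x i) (x (Suc i))) = RS_exp_by_parts \<alpha> g (x 0) (x k)"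
    if "k \<le> n" for k
    using that
  proof (induction k)
    case 0
    then show ?case by (simp add: RS_exp_by_parts_def)
  next
    case (Suc k)
    have "x 0 \<le> x k" "x k \<le> x (Suc k)" "x (Suc k) \<le> x n"
      using partition_mono[of n x, OF mono] Suc.prems by auto
    moreover have "continuous_on {x 0..x (Suc k)} g"
      by (rule continuous_on_subset[OF g]) (use calculation in auto)
    ultimately show ?case using Suc RS_exp_by_parts_add by simp
  qed
  then show ?thesis by simp
qed

lemma integral_exp_weight_approx:
  fixes g :: "real \<Rightarrow> real"
  assumes "p \<le> q" "\<alpha> > 0" "continuous_on {p..q} g"
    and close: "\<And>s. s \<in> {p..q} \<Longrightarrow> \<bar>g s - y\<bar> \<le> e"
  shows "\<bar>y * (exp (- \<alpha> * p) - exp (- \<alpha> * q)) - integral {p..q} (\<lambda>s. \<alpha> * exp (- \<alpha> * s) * g s)\<bar>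
           \<le> e * (exp (- \<alpha> * p) - exp (- \<alpha> * q))"
proof -
  define F where "F s = \<alpha> * exp (- \<alpha> * s)" for s
  have F: "(F has_integral (exp (- \<alpha> * p) - exp (- \<alpha> * q))) {p..q}"
    unfolding F_def by (rule has_integral_exp_neg_scaled[OF assms(1)])
  have Fg: "(\<lambda>s. F s * g s) integrable_on {p..q}"
    unfolding F_def using assms(3) by (intro integrable_continuous_real continuous_intros)
  have dev: "((\<lambda>s. F s * (y - g s)) has_integral
      (y * (exp (- \<alpha> * p) - exp (- \<alpha> * q)) - integral {p..q} (\<lambda>s. F s * g s))) {p..q}"
  proof -
    have "((\<lambda>s. y * F s - F s * g s) has_integral
        (y * (exp (- \<alpha> * p) - exp (- \<alpha> * q)) - integral {p..q} (\<lambda>s. F s * g s))) {p..q}"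
      by (intro has_integral_diff has_integral_mult_right F integrable_integral Fg)
    then show ?thesis by (simp add: algebra_simps)
  qed
  have "norm (integral {p..q} (\<lambda>s. F s * (y - g s))) \<le> integral {p..q} (\<lambda>s. e * F s)"
  proof (rule integral_norm_bound_integral)
    show "(\<lambda>s. F s * (y - g s)) integrable_on {p..q}" using dev by blast
    show "(\<lambda>s. e * F s) integrable_on {p..q}" using has_integral_mult_right[OF F] by blast
    fix s assume "s \<in> {p..q}"
    then have "\<bar>y - g s\<bar> \<le> e" using close by (simp add: abs_minus_commute)
    moreover have "F s > 0" using assms(2) unfolding F_def by simp
    ultimately show "norm (F s * (y - g s)) \<le> e * F s"
      by (simp add: abs_mult mult.commute mult_right_mono)
  qed
  also have "\<dots> = e * (exp (- \<alpha> * p) - exp (- \<alpha> * q))"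
    using has_integral_mult_right[OF F, of e] by (rule integral_unique)
  finally show ?thesis using integral_unique[OF dev] unfolding F_def by simp
qed

lemma RS_exp_by_parts_term_approx:
  fixes g :: "real \<Rightarrow> real"
  assumes \<xi>: "u0 \<le> \<xi>" "\<xi> \<le> u1" and \<alpha>: "\<alpha> > 0" and g: "continuous_on {u0..u1} g"
    and close: "\<And>s. s \<in> {u0..u1} \<Longrightarrow> \<bar>g s - g u0\<bar> \<le> e \<and> \<bar>g s - g u1\<bar> \<le> e"
  shows "\<bar>exp (- \<alpha> * \<xi>) * (g u1 - g u0) - RS_exp_by_parts \<alpha> g u0 u1\<bar>
           \<le> e * (exp (- \<alpha> * u0) - exp (- \<alpha> * u1))"
proof -
  define h where "h s = \<alpha> * exp (- \<alpha> * s) * g s" for s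
  have split: "integral {u0..u1} h = integral {u0..\<xi>} h + integral {\<xi>..u1} h"
    unfolding h_def using g
    by (intro Henstock_Kurzweil_Integration.integral_combine[symmetric] \<xi> integrable_continuous_real continuous_intros) auto
  have left: "\<bar>g u0 * (exp (- \<alpha> * u0) - exp (- \<alpha> * \<xi>)) - integral {u0..\<xi>} h\<bar>
      \<le> e * (exp (- \<alpha> * u0) - exp (- \<alpha> * \<xi>))"
    unfolding h_def
  proof (rule integral_exp_weight_approx[OF \<xi>(1) \<alpha>])
    show "continuous_on {u0..\<xi>} g" by (rule continuous_on_subset[OF g]) (use \<xi> in auto)
  qed (use close \<xi> in auto)
  have right: "\<bar>g u1 * (exp (- \<alpha> * \<xi>) - exp (- \<alpha> * u1)) - integral {\<xi>..u1} h\<bar>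
      \<le> e * (exp (- \<alpha> * \<xi>) - exp (- \<alpha> * u1))"
    unfolding h_def
  proof (rule integral_exp_weight_approx[OF \<xi>(2) \<alpha>])
    show "continuous_on {\<xi>..u1} g" by (rule continuous_on_subset[OF g]) (use \<xi> in auto)
  qed (use close \<xi> in auto)
  have "exp (- \<alpha> * \<xi>) * (g u1 - g u0) - RS_exp_by_parts \<alpha> g u0 u1
     = (g u0 * (exp (- \<alpha> * u0) - exp (- \<alpha> * \<xi>)) - integral {u0..\<xi>} h)
       + (g u1 * (exp (- \<alpha> * \<xi>) - exp (- \<alpha> * u1)) - integral {\<xi>..u1} h)"
    unfolding RS_exp_by_parts_def h_def[symmetric] split by (simp add: algebra_simps)
  then show ?thesis using left right by (simp add: algebra_simps)
qed

lemma RS_exp_by_parts_sum_approx: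
  fixes g :: "real \<Rightarrow> real" and x \<xi> :: "nat \<Rightarrow> real"
  assumes \<alpha>: "\<alpha> > 0" and g: "continuous_on {x 0..x n} g"
    and tags: "\<And>i. i < n \<Longrightarrow> x i \<le> \<xi> i \<and> \<xi> i \<le> x (Suc i)"
    and close: "\<And>i s. i < n \<Longrightarrow> s \<in> {x i..x (Suc i)} \<Longrightarrow> \<bar>g s - g (x i)\<bar> \<le> e \<and> \<bar>g s - g (x (Suc i))\<bar> \<le> e"
  shows "\<bar>(\<Sum>i<n. exp (- \<alpha> * \<xi> i) * (g (x (Suc i)) - g (x i))) - RS_exp_by_parts \<alpha> g (x 0) (x n)\<bar>
           \<le> e * (exp (- \<alpha> * x 0) - exp (- \<alpha> * x n))"
proof -
  have mono: "\<And>i. i < n \<Longrightarrow> x i \<le> x (Suc i)" using tags by (meson order_trans)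
  have term_bound: "\<bar>exp (- \<alpha> * \<xi> i) * (g (x (Suc i)) - g (x i)) - RS_exp_by_parts \<alpha> g (x i) (x (Suc i))\<bar>
      \<le> e * (exp (- \<alpha> * x i) - exp (- \<alpha> * x (Suc i)))" if i: "i < n" for i
  proof (rule RS_exp_by_parts_term_approx[OF _ _ \<alpha>])
    show "x i \<le> \<xi> i" "\<xi> i \<le> x (Suc i)" using tags[OF i] by auto
    have "{x i..x (Suc i)} \<subseteq> {x 0..x n}"
      using partition_mono[of n x, OF mono, of 0 i] partition_mono[of n x, OF mono, of "Suc i" n] i by auto
    then show "continuous_on {x i..x (Suc i)} g" by (rule continuous_on_subset[OF g])
  qed (rule close[OF i])
  have "\<bar>(\<Sum>i<n. exp (- \<alpha> * \<xi> i) * (g (x (Suc i)) - g (x i))) - RS_exp_by_parts \<alpha> g (x 0) (x n)\<bar>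
      = \<bar>\<Sum>i<n. exp (- \<alpha> * \<xi> i) * (g (x (Suc i)) - g (x i)) - RS_exp_by_parts \<alpha> g (x i) (x (Suc i))\<bar>"
    by (simp only: RS_exp_by_parts_partition[OF mono g, symmetric] sum_subtractf)
  also have "\<dots> \<le> (\<Sum>i<n. e * (exp (- \<alpha> * x i) - exp (- \<alpha> * x (Suc i))))"
    by (rule order_trans[OF sum_abs sum_mono]) (use term_bound in auto)
  also have "\<dots> = e * (exp (- \<alpha> * x 0) - exp (- \<alpha> * x n))"
    using sum_lessThan_telescope'[of "\<lambda>i. exp (- \<alpha> * x i)" n] by (simp add: sum_distrib_left[symmetric])
  finally show ?thesis .
qed

lemma has_RS_integral_exp_neg:
  fixes g :: "real \<Rightarrow> real"
  assumes \<alpha>: "\<alpha> > 0" and uw: "u \<le> w" and g: "continuous_on {u..w} g"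
  shows "has_RS_integral (\<lambda>s. exp (- \<alpha> * s)) g u w (RS_exp_by_parts \<alpha> g u w)"
  unfolding has_RS_integral_def
proof (intro allI impI)
  fix e :: real assume e: "e > 0"
  define c where "c = exp (- \<alpha> * u) - exp (- \<alpha> * w)"
  have c: "c \<ge> 0" unfolding c_def using \<alpha> uw by auto
  define e' where "e' = e / (c + 1)"
  have e': "e' > 0" "e' * c < e" unfolding e'_def using e c by (simp_all add: field_simps)
  have "uniformly_continuous_on {u..w} g"
    by (rule compact_uniformly_continuous[OF g]) simp
  then obtain d where d: "d > 0"
    and dg: "\<And>s s'. s \<in> {u..w} \<Longrightarrow> s' \<in> {u..w} \<Longrightarrow> dist s' s < d \<Longrightarrow> dist (g s') (g s) < e'"
    unfolding uniformly_continuous_on_def using e' by metis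
  show "\<exists>d>0. \<forall>(n::nat) (x::nat \<Rightarrow> real) (\<xi>::nat \<Rightarrow> real).
        x 0 = u \<and> x n = w \<and> (\<forall>i<n. x i \<le> \<xi> i \<and> \<xi> i \<le> x (Suc i) \<and> x (Suc i) - x i < d)
        \<longrightarrow> \<bar>(\<Sum>i<n. exp (- \<alpha> * \<xi> i) * (g (x (Suc i)) - g (x i))) - RS_exp_by_parts \<alpha> g u w\<bar> < e"
  proof (intro exI[of _ d] conjI allI impI d)
    fix n :: nat and x \<xi> :: "nat \<Rightarrow> real"
    assume P: "x 0 = u \<and> x n = w \<and> (\<forall>i<n. x i \<le> \<xi> i \<and> \<xi> i \<le> x (Suc i) \<and> x (Suc i) - x i < d)"
    have mono: "\<And>i. i < n \<Longrightarrow> x i \<le> x (Suc i)" using P by force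
    have x_in: "x i \<in> {u..w}" if "i \<le> n" for i
      using partition_mono[of n x, OF mono, of 0 i] partition_mono[of n x, OF mono, of i n] P that by auto
    have "\<bar>(\<Sum>i<n. exp (- \<alpha> * \<xi> i) * (g (x (Suc i)) - g (x i))) - RS_exp_by_parts \<alpha> g (x 0) (x n)\<bar>
        \<le> e' * (exp (- \<alpha> * x 0) - exp (- \<alpha> * x n))"
    proof (rule RS_exp_by_parts_sum_approx[OF \<alpha>])
      show "continuous_on {x 0..x n} g" using g P by simp
      show "x i \<le> \<xi> i \<and> \<xi> i \<le> x (Suc i)" if "i < n" for i using P that by auto
      fix i s assume i: "i < n" and s: "s \<in> {x i..x (Suc i)}"
      have "x (Suc i) - x i < d" using P i by auto
      then have "dist s (x i) < d" "dist s (x (Suc i)) < d" using s by (auto simp: dist_real_def)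
      moreover have "x i \<in> {u..w}" "x (Suc i) \<in> {u..w}" "s \<in> {u..w}"
        using x_in[of i] x_in[of "Suc i"] i s by auto
      ultimately have "dist (g s) (g (x i)) < e'" "dist (g s) (g (x (Suc i))) < e'"
        using dg[of "x i" s] dg[of "x (Suc i)" s] by auto
      then show "\<bar>g s - g (x i)\<bar> \<le> e' \<and> \<bar>g s - g (x (Suc i))\<bar> \<le> e'"
        by (auto simp: dist_real_def)
    qed
    then show "\<bar>(\<Sum>i<n. exp (- \<alpha> * \<xi> i) * (g (x (Suc i)) - g (x i))) - RS_exp_by_parts \<alpha> g u w\<bar> < e"
      using P e' unfolding c_def by simp
  qed
qed

definition grid :: "real \<Rightarrow> real \<Rightarrow> nat \<Rightarrow> nat \<Rightarrow> real" where
  "grid u w m i = u + real i * (w - u) / real (Suc m)"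

lemma grid_0 [simp]: "grid u w m 0 = u"
  by (simp add: grid_def)

lemma grid_last [simp]: "grid u w m (Suc m) = w"
  unfolding grid_def using nonzero_mult_div_cancel_left[of "real (Suc m)" "w - u"]
  by (simp del: of_nat_Suc)

lemma grid_step: "grid u w m (Suc i) - grid u w m i = (w - u) / real (Suc m)"
  unfolding grid_def by (simp add: diff_divide_distrib[symmetric] algebra_simps)

lemma grid_mono:
  assumes "u \<le> w"
  shows "grid u w m i \<le> grid u w m (Suc i)"
proof -
  have "0 \<le> (w - u) / real (Suc m)" using assms by simp
  then show ?thesis using grid_step[of u w m i] by linarith
qed

lemma grid_lower: "u \<le> w \<Longrightarrow> u \<le> grid u w m i"
  unfolding grid_def by (simp add: divide_nonneg_pos)

lemma grid_upper:
  assumes "u \<le> w" "i \<le> Suc m"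
  shows "grid u w m i \<le> w"
proof -
  have "real i * (w - u) \<le> real (Suc m) * (w - u)" using assms by (intro mult_right_mono) auto
  then have "real i * (w - u) / real (Suc m) \<le> w - u"
    by (simp add: divide_le_eq del: of_nat_Suc) (simp add: mult.commute)
  then show ?thesis unfolding grid_def by simp
qed

lemma grid_shift: "grid (u + s) (w + s) m i = grid u w m i + s"
  unfolding grid_def by simp

definition RS_uniform_sum :: "(real \<Rightarrow> real) \<Rightarrow> (real \<Rightarrow> real) \<Rightarrow> real \<Rightarrow> real \<Rightarrow> nat \<Rightarrow> real" where
  "RS_uniform_sum f g u w m =
     (\<Sum>i<Suc m. f (grid u w m i) * (g (grid u w m (Suc i)) - g (grid u w m i)))"

lemma has_RS_integral_uniform_sum_tendsto:
  assumes uw: "u \<le> w" and I: "has_RS_integral f g u w I"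
  shows "RS_uniform_sum f g u w \<longlonglongrightarrow> I"
proof (rule LIMSEQ_I)
  fix r :: real assume r: "r > 0"
  obtain d where d: "d > 0" and D: "\<forall>(n::nat) (x::nat \<Rightarrow> real) (\<xi>::nat \<Rightarrow> real).
        x 0 = u \<and> x n = w \<and> (\<forall>i<n. x i \<le> \<xi> i \<and> \<xi> i \<le> x (Suc i) \<and> x (Suc i) - x i < d)
        \<longrightarrow> \<bar>(\<Sum>i<n. f (\<xi> i) * (g (x (Suc i)) - g (x i))) - I\<bar> < r"
    using I[unfolded has_RS_integral_def, rule_format, OF r] by blast
  obtain N :: nat where N: "(w - u) / d < real N"
    using reals_Archimedean2 by blast
  show "\<exists>N. \<forall>m\<ge>N. norm (RS_uniform_sum f g u w m - I) < r"
  proof (intro exI allI impI)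
    fix m assume "N \<le> m"
    then have "(w - u) / d < real (Suc m)" using N by linarith
    then have "(w - u) / real (Suc m) < d" using d by (simp add: field_simps)
    then have part: "\<forall>i<Suc m. grid u w m i \<le> grid u w m i \<and> grid u w m i \<le> grid u w m (Suc i)
        \<and> grid u w m (Suc i) - grid u w m i < d"
      by (simp add: grid_mono[OF uw] grid_step)
    have "\<bar>(\<Sum>i<Suc m. f (grid u w m i) * (g (grid u w m (Suc i)) - g (grid u w m i))) - I\<bar> < r"
      using D[THEN spec[of _ "Suc m"], THEN spec[of _ "grid u w m"], THEN spec[of _ "grid u w m"]] part
      by simp
    then show "norm (RS_uniform_sum f g u w m - I) < r" unfolding RS_uniform_sum_def by simp
  qed
qed

lemma has_RS_integral_unique:
  assumes "u \<le> w" "has_RS_integral f g u w I" "has_RS_integral f g u w I'"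
  shows "I = I'"
  using has_RS_integral_uniform_sum_tendsto[OF assms(1,2)]
    has_RS_integral_uniform_sum_tendsto[OF assms(1,3)] by (rule LIMSEQ_unique)

lemma RS_integral_eqI:
  assumes "u \<le> w" "has_RS_integral f g u w I"
  shows "RS_integral f g u w = I"
  unfolding RS_integral_def
proof (rule the_equality)
  fix J assume "has_RS_integral f g u w J"
  then show "J = I" using has_RS_integral_unique[OF assms(1) _ assms(2)] by blast
qed fact

section \<open>The covariance kernel of fractional Brownian increments\<close>

definition abs_powr_deriv :: "real \<Rightarrow> real \<Rightarrow> real" where
  "abs_powr_deriv p y = p * sgn y * \<bar>y\<bar> powr (p - 1)"

lemma abs_powr_deriv_nonpos: "y \<le> 0 \<Longrightarrow> abs_powr_deriv p y = - (p * (- y) powr (p - 1))"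
  by (cases "y = 0") (simp_all add: abs_powr_deriv_def sgn_if)

lemma abs_powr_deriv_nonneg: "0 \<le> y \<Longrightarrow> abs_powr_deriv p y = p * y powr (p - 1)"
  by (cases "y = 0") (simp_all add: abs_powr_deriv_def sgn_if)

lemma has_real_derivative_abs_powr:
  assumes p: "1 < p"
  shows "((\<lambda>z. \<bar>z\<bar> powr p) has_real_derivative abs_powr_deriv p y) (at y)"
proof (cases y "0::real" rule: linorder_cases)
  case greater
  have "((\<lambda>z. z powr p) has_real_derivative abs_powr_deriv p y) (at y)"
    using has_real_derivative_powr[OF greater, of p] greater by (simp add: abs_powr_deriv_nonneg)
  then show ?thesis
    by (rule has_field_derivative_transform_within_open[of _ _ _ "{0<..}"]) (use greater in auto)
next
  case less
  have "((\<lambda>z. z powr p) has_real_derivative p * (- y) powr (p - 1)) (at (- y))"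
    using has_real_derivative_powr[of "- y" p] less by simp
  then have "((\<lambda>z. (- z) powr p) has_real_derivative p * (- y) powr (p - 1) * (- 1)) (at y)"
    by (rule DERIV_chain2) (auto intro!: derivative_eq_intros)
  then have "((\<lambda>z. (- z) powr p) has_real_derivative abs_powr_deriv p y) (at y)"
    using less by (simp add: abs_powr_deriv_nonpos)
  then show ?thesis
    by (rule has_field_derivative_transform_within_open[of _ _ _ "{..<0}"]) (use less in auto)
next
  case equal
  have "((\<lambda>z. (\<bar>z\<bar> powr p - \<bar>0\<bar> powr p) / (z - 0)) \<longlongrightarrow> 0) (at 0)"
  proof (rule Lim_null_comparison)
    show "\<forall>\<^sub>F z in at 0. norm ((\<bar>z\<bar> powr p - \<bar>0\<bar> powr p) / (z - 0)) \<le> \<bar>z\<bar> powr (p - 1)"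
    proof (rule always_eventually, rule allI)
      fix z :: real
      show "norm ((\<bar>z\<bar> powr p - \<bar>0\<bar> powr p) / (z - 0)) \<le> \<bar>z\<bar> powr (p - 1)"
      proof (cases "z = 0")
        case False
        then have "\<bar>z\<bar> powr p = \<bar>z\<bar> powr (p - 1) * \<bar>z\<bar>"
          using powr_add[of "\<bar>z\<bar>" "p - 1" 1] by simp
        then show ?thesis using False by simp
      qed simp
    qed
    have "((\<lambda>z. \<bar>z\<bar>) \<longlongrightarrow> 0) (at (0::real))"
      using tendsto_rabs_zero[OF tendsto_ident_at] by simp
    then show "((\<lambda>z. \<bar>z\<bar> powr (p - 1)) \<longlongrightarrow> 0) (at 0)"
      by (rule tendsto_zero_powrI) (use p in auto)
  qed
  then show ?thesis
    using equal unfolding has_field_derivative_iff by (simp add: abs_powr_deriv_def)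
qed

lemma abs_powr_deriv_strict_mono:
  assumes p: "1 < p" and yz: "y < z"
  shows "abs_powr_deriv p y < abs_powr_deriv p z"
proof -
  have q: "0 < p - 1" and p0: "0 < p" using p by simp_all
  consider "y < 0" "z \<le> 0" | "y < 0" "0 < z" | "0 \<le> y" using yz by linarith
  then show ?thesis
  proof cases
    case 1
    then have "(- z) powr (p - 1) < (- y) powr (p - 1)"
      using yz q by (intro powr_less_mono2) auto
    then show ?thesis using 1 p0 by (simp add: abs_powr_deriv_nonpos)
  next
    case 2
    then have "0 < p * (- y) powr (p - 1)" "0 < p * z powr (p - 1)" using p0 by simp_all
    then show ?thesis using 2 by (simp add: abs_powr_deriv_nonpos abs_powr_deriv_nonneg)
  next
    case 3
    then have "y powr (p - 1) < z powr (p - 1)"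
      using yz q by (intro powr_less_mono2) auto
    then show ?thesis using 3 yz p0 by (simp add: abs_powr_deriv_nonneg)
  qed
qed

lemma abs_powr_second_difference_pos:
  fixes x h k :: real
  assumes p: "1 < p" and h: "h > 0" and k: "k > 0"
  shows "\<bar>x + h\<bar> powr p + \<bar>x + k\<bar> powr p < \<bar>x + h + k\<bar> powr p + \<bar>x\<bar> powr p"
proof -
  define \<psi> where "\<psi> y = \<bar>y + h\<bar> powr p - \<bar>y\<bar> powr p" for y
  have \<psi>': "DERIV \<psi> y :> abs_powr_deriv p (y + h) - abs_powr_deriv p y" for y
  proof -
    have "DERIV (\<lambda>y. \<bar>y + h\<bar> powr p) y :> abs_powr_deriv p (y + h) * 1"
      by (rule DERIV_chain2[OF has_real_derivative_abs_powr[OF p]]) (auto intro!: derivative_eq_intros)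
    then show ?thesis
      unfolding \<psi>_def by (intro DERIV_diff) (auto intro: has_real_derivative_abs_powr[OF p])
  qed
  obtain \<xi> where "\<psi> (x + k) - \<psi> x = k * (abs_powr_deriv p (\<xi> + h) - abs_powr_deriv p \<xi>)"
    using MVT2[of x "x + k" \<psi> "\<lambda>y. abs_powr_deriv p (y + h) - abs_powr_deriv p y"] \<psi>' k by auto
  moreover have "abs_powr_deriv p \<xi> < abs_powr_deriv p (\<xi> + h)"
    using abs_powr_deriv_strict_mono[OF p] h by simp
  ultimately have "\<psi> (x + k) - \<psi> x > 0" using k by simp
  then show ?thesis unfolding \<psi>_def by (simp add: algebra_simps)
qed

definition fbm_incr_cov :: "real \<Rightarrow> real \<Rightarrow> real \<Rightarrow> real \<Rightarrow> real \<Rightarrow> real" where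
  "fbm_incr_cov p a b c d =
     (\<bar>d - a\<bar> powr p + \<bar>c - b\<bar> powr p - \<bar>d - b\<bar> powr p - \<bar>c - a\<bar> powr p) / 2"

lemma fbm_incr_cov_pos:
  assumes "1 < p" "a < b" "c < d"
  shows "fbm_incr_cov p a b c d > 0"
  using abs_powr_second_difference_pos[OF assms(1), of "b - a" "d - c" "c - b"] assms
  unfolding fbm_incr_cov_def by (simp add: algebra_simps)

lemma fbm_incr_cov_nonneg:
  assumes "1 < p" "a \<le> b" "c \<le> d"
  shows "fbm_incr_cov p a b c d \<ge> 0"
proof (cases "a < b \<and> c < d")
  case True
  then show ?thesis using fbm_incr_cov_pos[OF assms(1)] by (simp add: less_imp_le)
next
  case False
  then have "a = b \<or> c = d" using assms by auto
  then show ?thesis unfolding fbm_incr_cov_def by auto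
qed

lemma fbm_incr_cov_commute: "fbm_incr_cov p a b c d = fbm_incr_cov p c d a b"
  unfolding fbm_incr_cov_def by (simp add: abs_minus_commute algebra_simps)

lemma fbm_incr_cov_telescope_left:
  fixes x :: "nat \<Rightarrow> real"
  shows "(\<Sum>i<n. fbm_incr_cov p (x i) (x (Suc i)) c d) = fbm_incr_cov p (x 0) (x n) c d"
proof -
  define G where "G t = (\<bar>c - t\<bar> powr p - \<bar>d - t\<bar> powr p) / 2" for t
  have "fbm_incr_cov p a b c d = G b - G a" for a b
    unfolding fbm_incr_cov_def G_def by (simp add: field_simps)
  then show ?thesis using sum_lessThan_telescope[of "\<lambda>i. G (x i)" n] by simp
qed

lemma fbm_incr_cov_telescope_right:
  fixes y :: "nat \<Rightarrow> real"
  shows "(\<Sum>j<n. fbm_incr_cov p a b (y j) (y (Suc j))) = fbm_incr_cov p a b (y 0) (y n)"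
  using fbm_incr_cov_telescope_left[where x=y] by (simp add: fbm_incr_cov_commute)

lemma fbm_incr_cov_scale:
  assumes "l > 0"
  shows "fbm_incr_cov p (l * a) (l * b) (l * c) (l * d) = l powr p * fbm_incr_cov p a b c d"
proof -
  have "\<bar>l * x - l * y\<bar> powr p = l powr p * \<bar>x - y\<bar> powr p" for x y
    using assms by (simp add: right_diff_distrib[symmetric] abs_mult powr_mult)
  then show ?thesis unfolding fbm_incr_cov_def by (simp add: field_simps)
qed

lemma fbm_incr_cov_le:
  assumes p: "1 < p" and "0 \<le> a" "a \<le> b" "b \<le> c" "c \<le> d"
  shows "fbm_incr_cov p a b c d \<le> (b - a) * p * (d - a) powr (p - 1) / 2"
proof -
  have "\<bar>c - b\<bar> powr p \<le> \<bar>c - a\<bar> powr p" using assms by (intro powr_mono2) auto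
  moreover have "\<bar>d - a\<bar> powr p - \<bar>d - b\<bar> powr p \<le> (b - a) * (p * (d - a) powr (p - 1))"
  proof (cases "a = b")
    case False
    then obtain \<xi> where "\<xi> < d - a"
      and eq: "\<bar>d - a\<bar> powr p - \<bar>d - b\<bar> powr p = (d - a - (d - b)) * abs_powr_deriv p \<xi>"
      using MVT2[of "d - b" "d - a" "\<lambda>z. \<bar>z\<bar> powr p" "abs_powr_deriv p"]
        has_real_derivative_abs_powr[OF p] assms by fastforce
    have "abs_powr_deriv p \<xi> \<le> abs_powr_deriv p (d - a)"
      using abs_powr_deriv_strict_mono[OF p \<open>\<xi> < d - a\<close>] by simp
    also have "\<dots> = p * (d - a) powr (p - 1)" using assms by (simp add: abs_powr_deriv_nonneg)
    finally show ?thesis using eq assms by (simp add: mult_left_mono)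
  qed simp
  ultimately show ?thesis unfolding fbm_incr_cov_def by simp
qed

section \<open>Gaussian moments and limits of square-bounded random variables\<close>

lemma (in prob_space) normal_fourth_moment:
  fixes L :: "'a \<Rightarrow> real"
  assumes \<sigma>: "\<sigma> > 0" and D: "distributed M lborel L (normal_density 0 \<sigma>)"
  shows "integrable M (\<lambda>\<omega>. (L \<omega>) ^ 4)"
    and "(\<integral>\<omega>. (L \<omega>) ^ 4 \<partial>M) = 3 * (\<integral>\<omega>. (L \<omega>)\<^sup>2 \<partial>M)\<^sup>2"
proof -
  have "integrable lborel (\<lambda>x. normal_density 0 \<sigma> x * x ^ 4)"
    using integrable_normal_moment[where k=4 and \<mu>=0, OF \<sigma>] by simp
  then show "integrable M (\<lambda>\<omega>. (L \<omega>) ^ 4)"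
    using distributed_integrable[OF D, of "\<lambda>x. x ^ 4"] by simp
  have "(\<integral>\<omega>. (L \<omega>) ^ 4 \<partial>M) = (\<integral>x. normal_density 0 \<sigma> x * x ^ 4 \<partial>lborel)"
    using distributed_integral[OF D, of "\<lambda>x. x ^ 4"] by simp
  also have "\<dots> = fact (2 * 2) / ((2 / \<sigma>\<^sup>2)\<^sup>2 * fact 2)"
    using integral_normal_moment_even[where k=2 and \<mu>=0, OF \<sigma>] by simp
  also have "\<dots> = 3 * (\<sigma>\<^sup>2)\<^sup>2"
    using \<sigma> by (simp add: fact_numeral field_simps flip: power_mult)
  also have "\<sigma>\<^sup>2 = (\<integral>\<omega>. (L \<omega>)\<^sup>2 \<partial>M)"
  proof -
    have "(\<integral>\<omega>. (L \<omega>)\<^sup>2 \<partial>M) = (\<integral>x. normal_density 0 \<sigma> x * x\<^sup>2 \<partial>lborel)"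
      using distributed_integral[OF D, of "\<lambda>x. x\<^sup>2"] by simp
    also have "\<dots> = fact (2 * 1) / ((2 / \<sigma>\<^sup>2) ^ 1 * fact 1)"
      using integral_normal_moment_even[where k=1 and \<mu>=0, OF \<sigma>] by simp
    also have "\<dots> = \<sigma>\<^sup>2" using \<sigma> by (simp add: field_simps)
    finally show ?thesis by simp
  qed
  finally show "(\<integral>\<omega>. (L \<omega>) ^ 4 \<partial>M) = 3 * (\<integral>\<omega>. (L \<omega>)\<^sup>2 \<partial>M)\<^sup>2" .
qed

lemma (in prob_space) centered_gaussian_fourth_moment:
  fixes L :: "'a \<Rightarrow> real"
  assumes L: "L \<in> borel_measurable M"
    and mean: "integrable M L" "(\<integral>\<omega>. L \<omega> \<partial>M) = 0"
    and gaussian: "(\<sigma> > 0 \<and> distributed M lborel L (normal_density \<mu> \<sigma>)) \<or> (AE \<omega> in M. L \<omega> = \<mu>)"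
  shows "integrable M (\<lambda>\<omega>. (L \<omega>) ^ 4)"
    and "(\<integral>\<omega>. (L \<omega>) ^ 4 \<partial>M) = 3 * (\<integral>\<omega>. (L \<omega>)\<^sup>2 \<partial>M)\<^sup>2"
proof -
  have "(\<sigma> > 0 \<and> distributed M lborel L (normal_density 0 \<sigma>)) \<or> (AE \<omega> in M. L \<omega> = 0)"
  proof (cases "\<sigma> > 0 \<and> distributed M lborel L (normal_density \<mu> \<sigma>)")
    case True
    then have "\<mu> = 0" using normal_distributed_expectation[of \<sigma> L \<mu>] mean by simp
    then show ?thesis using True by simp
  next
    case False
    then have ae: "AE \<omega> in M. L \<omega> = \<mu>" using gaussian by blast
    then have "(\<integral>\<omega>. L \<omega> \<partial>M) = (\<integral>\<omega>. \<mu> \<partial>M)"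
      by (intro integral_cong_AE) (use L in auto)
    then have "\<mu> = 0" using mean by (simp add: prob_space)
    then show ?thesis using ae by simp
  qed
  then have "integrable M (\<lambda>\<omega>. (L \<omega>) ^ 4) \<and> (\<integral>\<omega>. (L \<omega>) ^ 4 \<partial>M) = 3 * (\<integral>\<omega>. (L \<omega>)\<^sup>2 \<partial>M)\<^sup>2"
  proof
    assume "\<sigma> > 0 \<and> distributed M lborel L (normal_density 0 \<sigma>)"
    then show ?thesis using normal_fourth_moment by blast
  next
    assume ae: "AE \<omega> in M. L \<omega> = 0"
    have "integrable M (\<lambda>\<omega>. (L \<omega>) ^ 4) = integrable M (\<lambda>\<omega>. 0::real)"
      by (rule integrable_cong_AE) (use L ae in auto)
    moreover have "(\<integral>\<omega>. (L \<omega>) ^ 4 \<partial>M) = 0" "(\<integral>\<omega>. (L \<omega>)\<^sup>2 \<partial>M) = 0"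
      using integral_cong_AE[of "\<lambda>\<omega>. (L \<omega>) ^ 4" M "\<lambda>_. 0"] integral_cong_AE[of "\<lambda>\<omega>. (L \<omega>)\<^sup>2" M "\<lambda>_. 0"]
        L ae by auto
    ultimately show ?thesis by simp
  qed
  then show "integrable M (\<lambda>\<omega>. (L \<omega>) ^ 4)" "(\<integral>\<omega>. (L \<omega>) ^ 4 \<partial>M) = 3 * (\<integral>\<omega>. (L \<omega>)\<^sup>2 \<partial>M)\<^sup>2"
    by auto
qed

lemma abs_diff_clamp_le:
  fixes K x :: real
  assumes "K > 0"
  shows "\<bar>x - max (- K) (min K x)\<bar> \<le> x\<^sup>2 / K"
proof (cases "\<bar>x\<bar> \<le> K")
  case True
  then show ?thesis using assms by simp
next
  case False
  then have "\<bar>x - max (- K) (min K x)\<bar> \<le> \<bar>x\<bar>" using assms by auto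
  also have "\<bar>x\<bar> * K \<le> \<bar>x\<bar> * \<bar>x\<bar>" using False assms by (intro mult_left_mono) auto
  then have "\<bar>x\<bar> \<le> x\<^sup>2 / K" using assms by (simp add: field_simps power2_eq_square)
  finally show ?thesis .
qed

lemma (in finite_measure) integral_clamp_error:
  fixes f :: "'a \<Rightarrow> real"
  assumes f: "f \<in> borel_measurable M" "integrable M (\<lambda>\<omega>. (f \<omega>)\<^sup>2)"
    and K: "K > 0"
  shows "\<bar>(\<integral>\<omega>. f \<omega> \<partial>M) - (\<integral>\<omega>. max (- K) (min K (f \<omega>)) \<partial>M)\<bar> \<le> (\<integral>\<omega>. (f \<omega>)\<^sup>2 \<partial>M) / K"
proof -
  have fi: "integrable M f" by (rule square_integrable_imp_integrable[OF f])
  have ci: "integrable M (\<lambda>\<omega>. max (- K) (min K (f \<omega>)))"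
    by (rule integrable_const_bound[where B=K]) (use f(1) K in auto)
  have "\<bar>(\<integral>\<omega>. f \<omega> \<partial>M) - (\<integral>\<omega>. max (- K) (min K (f \<omega>)) \<partial>M)\<bar>
      = \<bar>\<integral>\<omega>. f \<omega> - max (- K) (min K (f \<omega>)) \<partial>M\<bar>"
    using fi ci by simp
  also have "\<dots> \<le> (\<integral>\<omega>. \<bar>f \<omega> - max (- K) (min K (f \<omega>))\<bar> \<partial>M)"
    using integral_norm_bound[of M "\<lambda>\<omega>. f \<omega> - max (- K) (min K (f \<omega>))"] by simp
  also have "\<dots> \<le> (\<integral>\<omega>. (f \<omega>)\<^sup>2 / K \<partial>M)"
    by (rule integral_mono) (use fi ci f(2) abs_diff_clamp_le[OF K] in auto)
  also have "\<dots> = (\<integral>\<omega>. (f \<omega>)\<^sup>2 \<partial>M) / K" by simp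
  finally show ?thesis .
qed

text \<open>Fatou's lemma applied to the squares.\<close>
lemma L2_bound_pointwise_limit:
  fixes X :: "nat \<Rightarrow> 'a \<Rightarrow> real" and L :: "'a \<Rightarrow> real"
  assumes meas: "\<And>m. X m \<in> borel_measurable M"
    and lim: "\<And>\<omega>. \<omega> \<in> space M \<Longrightarrow> (\<lambda>m. X m \<omega>) \<longlonglongrightarrow> L \<omega>"
    and sq: "\<And>m. integrable M (\<lambda>\<omega>. (X m \<omega>)\<^sup>2)"
    and bound: "\<And>m. (\<integral>\<omega>. (X m \<omega>)\<^sup>2 \<partial>M) \<le> C"
  shows "integrable M (\<lambda>\<omega>. (L \<omega>)\<^sup>2)" and "(\<integral>\<omega>. (L \<omega>)\<^sup>2 \<partial>M) \<le> C"
proof -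
  have L: "L \<in> borel_measurable M" by (rule borel_measurable_LIMSEQ_real[OF lim meas])
  have "0 \<le> (\<integral>\<omega>. (X 0 \<omega>)\<^sup>2 \<partial>M)" by (intro integral_nonneg_AE) auto
  then have C: "0 \<le> C" using bound[of 0] by linarith
  have "(\<integral>\<^sup>+\<omega>. ennreal ((L \<omega>)\<^sup>2) \<partial>M) = (\<integral>\<^sup>+\<omega>. liminf (\<lambda>m. ennreal ((X m \<omega>)\<^sup>2)) \<partial>M)"
  proof (rule nn_integral_cong)
    fix \<omega> assume "\<omega> \<in> space M"
    then have "(\<lambda>m. ennreal ((X m \<omega>)\<^sup>2)) \<longlonglongrightarrow> ennreal ((L \<omega>)\<^sup>2)"
      by (intro tendsto_ennrealI tendsto_power lim)
    then show "ennreal ((L \<omega>)\<^sup>2) = liminf (\<lambda>m. ennreal ((X m \<omega>)\<^sup>2))"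
      by (rule lim_imp_Liminf[symmetric, rotated]) simp
  qed
  also have "\<dots> \<le> liminf (\<lambda>m. \<integral>\<^sup>+\<omega>. ennreal ((X m \<omega>)\<^sup>2) \<partial>M)"
    by (rule nn_integral_liminf) (use meas in measurable)
  also have "\<dots> \<le> liminf (\<lambda>m. ennreal C)"
  proof (rule Liminf_mono, rule always_eventually, rule allI)
    fix m
    have "(\<integral>\<^sup>+\<omega>. ennreal ((X m \<omega>)\<^sup>2) \<partial>M) = ennreal (\<integral>\<omega>. (X m \<omega>)\<^sup>2 \<partial>M)"
      by (rule nn_integral_eq_integral) (use sq in auto)
    then show "(\<integral>\<^sup>+\<omega>. ennreal ((X m \<omega>)\<^sup>2) \<partial>M) \<le> ennreal C"
      using bound[of m] by (simp add: ennreal_leI)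
  qed
  finally have fatou: "(\<integral>\<^sup>+\<omega>. ennreal ((L \<omega>)\<^sup>2) \<partial>M) \<le> ennreal C"
    by (simp add: Liminf_const)
  show L2: "integrable M (\<lambda>\<omega>. (L \<omega>)\<^sup>2)"
  proof (rule integrableI_bounded)
    show "(\<lambda>\<omega>. (L \<omega>)\<^sup>2) \<in> borel_measurable M" using L by measurable
    show "(\<integral>\<^sup>+\<omega>. ennreal (norm ((L \<omega>)\<^sup>2)) \<partial>M) < \<infinity>"
      using fatou by (simp add: le_less_trans)
  qed
  have "ennreal (\<integral>\<omega>. (L \<omega>)\<^sup>2 \<partial>M) = (\<integral>\<^sup>+\<omega>. ennreal ((L \<omega>)\<^sup>2) \<partial>M)"
    by (rule nn_integral_eq_integral[symmetric]) (use L2 in auto)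
  then have "ennreal (\<integral>\<omega>. (L \<omega>)\<^sup>2 \<partial>M) \<le> ennreal C" using fatou by simp
  then show "(\<integral>\<omega>. (L \<omega>)\<^sup>2 \<partial>M) \<le> C" using C ennreal_le_iff by blast
qed

text \<open>Clamp at level \<open>K\<close>: dominated convergence handles the clamped variables, and the
  clamping error is at most \<open>C / K\<close>.\<close>
lemma (in finite_measure) L2_bounded_integral_tendsto:
  fixes X :: "nat \<Rightarrow> 'a \<Rightarrow> real" and L :: "'a \<Rightarrow> real"
  assumes meas: "\<And>m. X m \<in> borel_measurable M"
    and lim: "\<And>\<omega>. \<omega> \<in> space M \<Longrightarrow> (\<lambda>m. X m \<omega>) \<longlonglongrightarrow> L \<omega>"
    and sq: "\<And>m. integrable M (\<lambda>\<omega>. (X m \<omega>)\<^sup>2)"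
    and bound: "\<And>m. (\<integral>\<omega>. (X m \<omega>)\<^sup>2 \<partial>M) \<le> C"
  shows "integrable M L" and "(\<lambda>m. \<integral>\<omega>. X m \<omega> \<partial>M) \<longlonglongrightarrow> (\<integral>\<omega>. L \<omega> \<partial>M)"
proof -
  have L: "L \<in> borel_measurable M" by (rule borel_measurable_LIMSEQ_real[OF lim meas])
  note L2 = L2_bound_pointwise_limit[OF meas lim sq bound]
  show "integrable M L" by (rule square_integrable_imp_integrable[OF L L2(1)])
  have "0 \<le> (\<integral>\<omega>. (X 0 \<omega>)\<^sup>2 \<partial>M)" by (intro integral_nonneg_AE) auto
  then have C: "0 \<le> C" using bound[of 0] by linarith
  show "(\<lambda>m. \<integral>\<omega>. X m \<omega> \<partial>M) \<longlonglongrightarrow> (\<integral>\<omega>. L \<omega> \<partial>M)"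
  proof (rule LIMSEQ_I)
    fix r :: real assume r: "r > 0"
    define K where "K = 4 * (C + 1) / r"
    have K: "K > 0" unfolding K_def using r C by simp
    have CK: "2 * (C / K) < r / 2"
      unfolding K_def using r C by (simp add: field_simps)
    define clamp where "clamp x = max (- K) (min K x)" for x
    have "(\<lambda>m. \<integral>\<omega>. clamp (X m \<omega>) \<partial>M) \<longlonglongrightarrow> (\<integral>\<omega>. clamp (L \<omega>) \<partial>M)"
    proof (rule integral_dominated_convergence[where w="\<lambda>_. K"])
      show "(\<lambda>\<omega>. clamp (L \<omega>)) \<in> borel_measurable M" unfolding clamp_def using L by measurable
      show "(\<lambda>\<omega>. clamp (X m \<omega>)) \<in> borel_measurable M" for m
        unfolding clamp_def using meas[of m] by measurable
      show "AE \<omega> in M. (\<lambda>m. clamp (X m \<omega>)) \<longlonglongrightarrow> clamp (L \<omega>)"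
        unfolding clamp_def by (intro AE_I2 tendsto_max tendsto_min tendsto_const lim)
      show "AE \<omega> in M. norm (clamp (X m \<omega>)) \<le> K" for m
        using K unfolding clamp_def by auto
    qed simp
    then obtain N where N: "\<And>m. m \<ge> N \<Longrightarrow> \<bar>(\<integral>\<omega>. clamp (X m \<omega>) \<partial>M) - (\<integral>\<omega>. clamp (L \<omega>) \<partial>M)\<bar> < r / 2"
      using r LIMSEQ_D[of _ _ "r / 2"] by (metis half_gt_zero real_norm_def)
    show "\<exists>N. \<forall>m\<ge>N. norm ((\<integral>\<omega>. X m \<omega> \<partial>M) - (\<integral>\<omega>. L \<omega> \<partial>M)) < r"
    proof (intro exI allI impI)
      fix m assume "m \<ge> N"
      have "\<bar>(\<integral>\<omega>. X m \<omega> \<partial>M) - (\<integral>\<omega>. clamp (X m \<omega>) \<partial>M)\<bar> \<le> C / K"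
        using integral_clamp_error[OF meas sq K, of m] bound[of m] K unfolding clamp_def
        by (smt (verit) divide_right_mono)
      moreover have "\<bar>(\<integral>\<omega>. L \<omega> \<partial>M) - (\<integral>\<omega>. clamp (L \<omega>) \<partial>M)\<bar> \<le> C / K"
        using integral_clamp_error[OF L L2(1) K] L2(2) K unfolding clamp_def
        by (smt (verit) divide_right_mono)
      ultimately show "norm ((\<integral>\<omega>. X m \<omega> \<partial>M) - (\<integral>\<omega>. L \<omega> \<partial>M)) < r"
        using N[OF \<open>m \<ge> N\<close>] CK unfolding real_norm_def by linarith
    qed
  qed
qed

section \<open>Linear combinations of fractional Brownian increments\<close>

lemma continuous_fBm_prob_space: "continuous_fBm M H Z \<Longrightarrow> prob_space M"
  unfolding continuous_fBm_def by blast

lemma continuous_fBm_measurable: "continuous_fBm M H Z \<Longrightarrow> 0 \<le> t \<Longrightarrow> Z t \<in> borel_measurable M"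
  unfolding continuous_fBm_def by blast

lemma continuous_fBm_mean:
  "continuous_fBm M H Z \<Longrightarrow> 0 \<le> t \<Longrightarrow> integrable M (Z t) \<and> (\<integral>\<omega>. Z t \<omega> \<partial>M) = 0"
  unfolding continuous_fBm_def by blast

lemma continuous_fBm_cov:
  "continuous_fBm M H Z \<Longrightarrow> 0 \<le> t \<Longrightarrow> 0 \<le> s \<Longrightarrow> integrable M (\<lambda>\<omega>. Z t \<omega> * Z s \<omega>) \<and>
     (\<integral>\<omega>. Z t \<omega> * Z s \<omega> \<partial>M) = (t powr (2 * H) + s powr (2 * H) - \<bar>t - s\<bar> powr (2 * H)) / 2"
  unfolding continuous_fBm_def by blast

lemma continuous_fBm_increment_cov:
  assumes fBm: "continuous_fBm M H Z" and "0 \<le> a" "0 \<le> b" "0 \<le> c" "0 \<le> d"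
  shows "integrable M (\<lambda>\<omega>. (Z b \<omega> - Z a \<omega>) * (Z d \<omega> - Z c \<omega>))"
    and "(\<integral>\<omega>. (Z b \<omega> - Z a \<omega>) * (Z d \<omega> - Z c \<omega>) \<partial>M) = fbm_incr_cov (2 * H) a b c d"
proof -
  note c1 = continuous_fBm_cov[OF fBm assms(3,5)] and c2 = continuous_fBm_cov[OF fBm assms(3,4)]
   and c3 = continuous_fBm_cov[OF fBm assms(2,5)] and c4 = continuous_fBm_cov[OF fBm assms(2,4)]
  have eq: "(\<lambda>\<omega>. (Z b \<omega> - Z a \<omega>) * (Z d \<omega> - Z c \<omega>)) =
      (\<lambda>\<omega>. Z b \<omega> * Z d \<omega> - Z b \<omega> * Z c \<omega> - Z a \<omega> * Z d \<omega> + Z a \<omega> * Z c \<omega>)"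
    by (simp add: fun_eq_iff algebra_simps)
  show "integrable M (\<lambda>\<omega>. (Z b \<omega> - Z a \<omega>) * (Z d \<omega> - Z c \<omega>))"
    unfolding eq using c1 c2 c3 c4 by auto
  have "(\<integral>\<omega>. (Z b \<omega> - Z a \<omega>) * (Z d \<omega> - Z c \<omega>) \<partial>M) =
     (\<integral>\<omega>. Z b \<omega> * Z d \<omega> \<partial>M) - (\<integral>\<omega>. Z b \<omega> * Z c \<omega> \<partial>M) - (\<integral>\<omega>. Z a \<omega> * Z d \<omega> \<partial>M)
       + (\<integral>\<omega>. Z a \<omega> * Z c \<omega> \<partial>M)"
    unfolding eq using c1 c2 c3 c4 by simp
  also have "\<dots> = fbm_incr_cov (2 * H) a b c d"
    using c1 c2 c3 c4 unfolding fbm_incr_cov_def by (simp add: abs_minus_commute field_simps)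
  finally show "(\<integral>\<omega>. (Z b \<omega> - Z a \<omega>) * (Z d \<omega> - Z c \<omega>) \<partial>M) = fbm_incr_cov (2 * H) a b c d" .
qed

definition incr_comb ::
  "(real \<Rightarrow> 'a \<Rightarrow> real) \<Rightarrow> nat \<Rightarrow> (nat \<Rightarrow> real) \<Rightarrow> (nat \<Rightarrow> real) \<Rightarrow> (nat \<Rightarrow> real) \<Rightarrow> 'a \<Rightarrow> real" where
  "incr_comb Z n c a b \<omega> = (\<Sum>i<n. c i * (Z (b i) \<omega> - Z (a i) \<omega>))"

context
  fixes M :: "'a measure" and H :: real and Z :: "real \<Rightarrow> 'a \<Rightarrow> real"
  assumes fBm: "continuous_fBm M H Z"
begin

lemma incr_comb_measurable:
  assumes "\<forall>i<n. 0 \<le> a i \<and> 0 \<le> b i"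
  shows "incr_comb Z n c a b \<in> borel_measurable M"
  unfolding incr_comb_def using assms continuous_fBm_measurable[OF fBm]
  by (intro borel_measurable_sum borel_measurable_times borel_measurable_const borel_measurable_diff) auto

lemma incr_comb_mean:
  assumes "\<forall>i<n. 0 \<le> a i \<and> 0 \<le> b i"
  shows "integrable M (incr_comb Z n c a b)" and "(\<integral>\<omega>. incr_comb Z n c a b \<omega> \<partial>M) = 0"
proof -
  have i: "integrable M (\<lambda>\<omega>. c i * (Z (b i) \<omega> - Z (a i) \<omega>))"
    "(\<integral>\<omega>. c i * (Z (b i) \<omega> - Z (a i) \<omega>) \<partial>M) = 0" if "i < n" for i
    using continuous_fBm_mean[OF fBm, of "a i"] continuous_fBm_mean[OF fBm, of "b i"] assms that by auto
  show "integrable M (incr_comb Z n c a b)"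
    unfolding incr_comb_def[abs_def] using i by auto
  show "(\<integral>\<omega>. incr_comb Z n c a b \<omega> \<partial>M) = 0"
    unfolding incr_comb_def using i by (subst Bochner_Integration.integral_sum) (auto intro!: sum.neutral)
qed

lemma incr_comb_product:
  assumes "\<forall>i<n. 0 \<le> a i \<and> 0 \<le> b i" and "\<forall>j<m. 0 \<le> a' j \<and> 0 \<le> b' j"
  shows "integrable M (\<lambda>\<omega>. incr_comb Z n c a b \<omega> * incr_comb Z m d a' b' \<omega>)"
    and "(\<integral>\<omega>. incr_comb Z n c a b \<omega> * incr_comb Z m d a' b' \<omega> \<partial>M) =
         (\<Sum>i<n. \<Sum>j<m. c i * d j * fbm_incr_cov (2 * H) (a i) (b i) (a' j) (b' j))"
proof -
  define P where "P i j \<omega> = c i * d j * ((Z (b i) \<omega> - Z (a i) \<omega>) * (Z (b' j) \<omega> - Z (a' j) \<omega>))" for i j \<omega>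
  have eq: "(\<lambda>\<omega>. incr_comb Z n c a b \<omega> * incr_comb Z m d a' b' \<omega>) = (\<lambda>\<omega>. \<Sum>i<n. \<Sum>j<m. P i j \<omega>)"
    unfolding incr_comb_def P_def by (simp add: fun_eq_iff sum_product algebra_simps)
  have P: "integrable M (P i j)" "(\<integral>\<omega>. P i j \<omega> \<partial>M) = c i * d j * fbm_incr_cov (2 * H) (a i) (b i) (a' j) (b' j)"
    if "i < n" "j < m" for i j
    unfolding P_def using continuous_fBm_increment_cov[OF fBm, of "a i" "b i" "a' j" "b' j"] assms that
    by auto
  show "integrable M (\<lambda>\<omega>. incr_comb Z n c a b \<omega> * incr_comb Z m d a' b' \<omega>)"
    unfolding eq by (intro Bochner_Integration.integrable_sum) (use P in auto)
  show "(\<integral>\<omega>. incr_comb Z n c a b \<omega> * incr_comb Z m d a' b' \<omega> \<partial>M) =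
         (\<Sum>i<n. \<Sum>j<m. c i * d j * fbm_incr_cov (2 * H) (a i) (b i) (a' j) (b' j))"
  proof -
    have "(\<integral>\<omega>. (\<Sum>i<n. \<Sum>j<m. P i j \<omega>) \<partial>M) = (\<Sum>i<n. \<integral>\<omega>. (\<Sum>j<m. P i j \<omega>) \<partial>M)"
      by (rule Bochner_Integration.integral_sum) (use P in auto)
    also have "\<dots> = (\<Sum>i<n. \<Sum>j<m. \<integral>\<omega>. P i j \<omega> \<partial>M)"
      by (intro sum.cong refl Bochner_Integration.integral_sum) (use P in auto)
    also have "\<dots> = (\<Sum>i<n. \<Sum>j<m. c i * d j * fbm_incr_cov (2 * H) (a i) (b i) (a' j) (b' j))"
      by (intro sum.cong refl) (use P in auto)
    finally show ?thesis unfolding eq .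
  qed
qed

text \<open>A combination of increments is a combination of the values \<open>Z (b i)\<close>, \<open>Z (a i)\<close>, placed
  at the even and odd indices respectively; so it is Gaussian by the definition of a Gaussian process.\<close>
lemma incr_comb_gaussian:
  assumes "\<forall>i<n. 0 \<le> a i \<and> 0 \<le> b i"
  shows "\<exists>\<mu> \<sigma>. (\<sigma> > 0 \<and> distributed M lborel (incr_comb Z n c a b) (normal_density \<mu> \<sigma>))
              \<or> (AE \<omega> in M. incr_comb Z n c a b \<omega> = \<mu>)"
proof -
  define t where "t k = (if even k then b (k div 2) else a (k div 2))" for k
  define c' where "c' k = (if even k then c (k div 2) else - c (k div 2))" for k
  have "0 \<le> t k" if "k < 2 * n" for k
    using assms that unfolding t_def by (auto dest: spec[of _ "k div 2"])
  then have "\<exists>\<mu> \<sigma>. (\<sigma> > 0 \<and> distributed M lborel (\<lambda>\<omega>. \<Sum>k<2 * n. c' k * Z (t k) \<omega>) (normal_density \<mu> \<sigma>))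
              \<or> (AE \<omega> in M. (\<Sum>k<2 * n. c' k * Z (t k) \<omega>) = \<mu>)"
    using fBm unfolding continuous_fBm_def gaussian_process_def by blast
  moreover have "(\<Sum>k<2 * n. c' k * Z (t k) \<omega>) = incr_comb Z n c a b \<omega>" for \<omega>
  proof -
    have "(\<Sum>k<2 * n. c' k * Z (t k) \<omega>)
        = (\<Sum>i<n. c' (2 * i) * Z (t (2 * i)) \<omega> + c' (Suc (2 * i)) * Z (t (Suc (2 * i))) \<omega>)"
      by (induction n) (simp_all add: add.assoc)
    then show ?thesis unfolding incr_comb_def t_def c'_def by (simp add: right_diff_distrib)
  qed
  ultimately show ?thesis by (simp only:)
qed

lemma incr_comb_fourth_moment:
  assumes "\<forall>i<n. 0 \<le> a i \<and> 0 \<le> b i"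
  shows "integrable M (\<lambda>\<omega>. (incr_comb Z n c a b \<omega>) ^ 4)"
    and "(\<integral>\<omega>. (incr_comb Z n c a b \<omega>) ^ 4 \<partial>M) = 3 * (\<integral>\<omega>. (incr_comb Z n c a b \<omega>)\<^sup>2 \<partial>M)\<^sup>2"
proof -
  obtain \<mu> \<sigma> where "(\<sigma> > 0 \<and> distributed M lborel (incr_comb Z n c a b) (normal_density \<mu> \<sigma>))
      \<or> (AE \<omega> in M. incr_comb Z n c a b \<omega> = \<mu>)"
    using incr_comb_gaussian[OF assms] by blast
  note moments = prob_space.centered_gaussian_fourth_moment[OF continuous_fBm_prob_space[OF fBm]
      incr_comb_measurable[OF assms] incr_comb_mean[OF assms] this]
  show "integrable M (\<lambda>\<omega>. (incr_comb Z n c a b \<omega>) ^ 4)" by (rule moments(1))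
  show "(\<integral>\<omega>. (incr_comb Z n c a b \<omega>) ^ 4 \<partial>M) = 3 * (\<integral>\<omega>. (incr_comb Z n c a b \<omega>)\<^sup>2 \<partial>M)\<^sup>2"
    by (rule moments(2))
qed

end

section \<open>The integral against a time-changed fractional Brownian motion\<close>

locale time_changed_fBm_integral =
  fixes M :: "'a measure" and H \<alpha> :: real and Z :: "real \<Rightarrow> 'a \<Rightarrow> real"
    and a :: "real \<Rightarrow> real" and Y :: "real \<Rightarrow> 'a \<Rightarrow> real"
  assumes H: "1/2 < H" "H < 1"
    and fBm: "continuous_fBm M H Z"
    and \<alpha>: "\<alpha> > 0"
    and a_def: "\<And>t. a t = H * exp (\<alpha> * t / H) / \<alpha>"
    and Y_def: "\<And>t \<omega>. Y t \<omega> = RS_integral (\<lambda>s. exp (- \<alpha> * s)) (\<lambda>s. Z (a s) \<omega>) 0 t"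
begin

sublocale prob_space M
  by (rule continuous_fBm_prob_space[OF fBm])

abbreviation Za_incr_cov :: "real \<Rightarrow> real \<Rightarrow> real \<Rightarrow> real \<Rightarrow> real" where
  "Za_incr_cov u w u' w' \<equiv> fbm_incr_cov (2 * H) (a u) (a w) (a u') (a w')"

definition increment_cov :: "real \<Rightarrow> real \<Rightarrow> real \<Rightarrow> real \<Rightarrow> real" where
  "increment_cov u w u' w' = (\<integral>\<omega>. (Y w \<omega> - Y u \<omega>) * (Y w' \<omega> - Y u' \<omega>) \<partial>M)"

definition grid_sum :: "real \<Rightarrow> real \<Rightarrow> nat \<Rightarrow> 'a \<Rightarrow> real" where
  "grid_sum u w m \<omega> = RS_uniform_sum (\<lambda>s. exp (- \<alpha> * s)) (\<lambda>s. Z (a s) \<omega>) u w m"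

lemma one_lt_2H: "1 < 2 * H"
  using H by simp

lemma a_pos: "a t > 0"
  using H \<alpha> by (simp add: a_def)

lemma a_strict_mono: "s < t \<Longrightarrow> a s < a t"
  using H \<alpha> by (simp add: a_def divide_strict_right_mono)

lemma a_mono: "s \<le> t \<Longrightarrow> a s \<le> a t"
  using a_strict_mono[of s t] by (cases "s = t") auto

lemma a_shift: "a (t + s) = exp (\<alpha> * s / H) * a t"
  unfolding a_def by (simp add: distrib_left add_divide_distrib exp_add)

lemma Za_incr_cov_nonneg: "u \<le> w \<Longrightarrow> u' \<le> w' \<Longrightarrow> 0 \<le> Za_incr_cov u w u' w'"
  by (intro fbm_incr_cov_nonneg one_lt_2H a_mono)

lemma Za_continuous:
  assumes "\<omega> \<in> space M"
  shows "continuous_on {0..} (\<lambda>s. Z (a s) \<omega>)"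
proof (rule continuous_on_compose2[of "{0..}" "\<lambda>t. Z t \<omega>"])
  show "continuous_on {0..} (\<lambda>t. Z t \<omega>)" using fBm assms unfolding continuous_fBm_def by blast
  show "continuous_on {0..} a" unfolding a_def[abs_def] using H \<alpha> by (intro continuous_intros) auto
  show "a ` {0..} \<subseteq> {0..}" using a_pos by (auto intro: less_imp_le)
qed

lemma Y_eq_by_parts:
  assumes "\<omega> \<in> space M" "0 \<le> t"
  shows "Y t \<omega> = RS_exp_by_parts \<alpha> (\<lambda>s. Z (a s) \<omega>) 0 t"
proof -
  have "continuous_on {0..t} (\<lambda>s. Z (a s) \<omega>)"
    by (rule continuous_on_subset[OF Za_continuous[OF assms(1)]]) auto
  then show ?thesis
    unfolding Y_def by (intro RS_integral_eqI has_RS_integral_exp_neg \<alpha> assms(2))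
qed

lemma grid_sum_tendsto:
  assumes \<omega>: "\<omega> \<in> space M" and uw: "0 \<le> u" "u \<le> w"
  shows "(\<lambda>m. grid_sum u w m \<omega>) \<longlonglongrightarrow> Y w \<omega> - Y u \<omega>"
proof -
  define g where "g s = Z (a s) \<omega>" for s
  have g: "continuous_on {0..w} g"
    unfolding g_def by (rule continuous_on_subset[OF Za_continuous[OF \<omega>]]) auto
  have "Y w \<omega> - Y u \<omega> = RS_exp_by_parts \<alpha> g 0 w - RS_exp_by_parts \<alpha> g 0 u"
    using Y_eq_by_parts[OF \<omega>] uw unfolding g_def by simp
  also have "\<dots> = RS_exp_by_parts \<alpha> g u w"
    using RS_exp_by_parts_add[OF uw g, of \<alpha>] by linarith
  finally have Yuw: "Y w \<omega> - Y u \<omega> = RS_exp_by_parts \<alpha> g u w" .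
  have "has_RS_integral (\<lambda>s. exp (- \<alpha> * s)) g u w (RS_exp_by_parts \<alpha> g u w)"
    by (intro has_RS_integral_exp_neg[OF \<alpha> uw(2)] continuous_on_subset[OF g]) (use uw in auto)
  then show ?thesis
    unfolding Yuw grid_sum_def[abs_def] g_def by (rule has_RS_integral_uniform_sum_tendsto[OF uw(2)])
qed

lemma grid_sum_eq_incr_comb:
  "grid_sum u w m = incr_comb Z (Suc m) (\<lambda>i. exp (- \<alpha> * grid u w m i))
     (\<lambda>i. a (grid u w m i)) (\<lambda>i. a (grid u w m (Suc i)))"
  unfolding grid_sum_def[abs_def] RS_uniform_sum_def incr_comb_def by simp

lemma a_nonneg_at: "\<forall>i<n. 0 \<le> a (x i) \<and> 0 \<le> a (y i)"
  using a_pos by (auto intro: less_imp_le)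

lemma grid_sum_measurable: "grid_sum u w m \<in> borel_measurable M"
  unfolding grid_sum_eq_incr_comb by (rule incr_comb_measurable[OF fBm a_nonneg_at])

lemma grid_sum_mean: "integrable M (grid_sum u w m)" "(\<integral>\<omega>. grid_sum u w m \<omega> \<partial>M) = 0"
  unfolding grid_sum_eq_incr_comb by (rule incr_comb_mean[OF fBm a_nonneg_at])+

lemma grid_sum_fourth_moment:
  "integrable M (\<lambda>\<omega>. (grid_sum u w m \<omega>) ^ 4)"
  "(\<integral>\<omega>. (grid_sum u w m \<omega>) ^ 4 \<partial>M) = 3 * (\<integral>\<omega>. (grid_sum u w m \<omega>)\<^sup>2 \<partial>M)\<^sup>2"
  unfolding grid_sum_eq_incr_comb by (rule incr_comb_fourth_moment[OF fBm a_nonneg_at])+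

lemma grid_sum_cov:
  "integrable M (\<lambda>\<omega>. grid_sum u w m \<omega> * grid_sum u' w' m' \<omega>)"
  "(\<integral>\<omega>. grid_sum u w m \<omega> * grid_sum u' w' m' \<omega> \<partial>M) =
     (\<Sum>i<Suc m. \<Sum>j<Suc m'. exp (- \<alpha> * grid u w m i) * exp (- \<alpha> * grid u' w' m' j) *
        Za_incr_cov (grid u w m i) (grid u w m (Suc i)) (grid u' w' m' j) (grid u' w' m' (Suc j)))"
  unfolding grid_sum_eq_incr_comb by (rule incr_comb_product[OF fBm a_nonneg_at a_nonneg_at])+

text \<open>All terms of the double sum are nonnegative and the kernel telescopes, so the covariance of
  grid sums is squeezed between the extreme values of the exponential weights times the kernel.\<close>
lemma grid_sum_cov_bounds:
  assumes uw: "0 \<le> u" "u \<le> w" and uw': "0 \<le> u'" "u' \<le> w'"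
  shows "exp (- \<alpha> * w) * exp (- \<alpha> * w') * Za_incr_cov u w u' w'
           \<le> (\<integral>\<omega>. grid_sum u w m \<omega> * grid_sum u' w' m' \<omega> \<partial>M)"
    and "(\<integral>\<omega>. grid_sum u w m \<omega> * grid_sum u' w' m' \<omega> \<partial>M) \<le> exp (- \<alpha> * u') * Za_incr_cov u w u' w'"
proof -
  define k where
    "k i j = Za_incr_cov (grid u w m i) (grid u w m (Suc i)) (grid u' w' m' j) (grid u' w' m' (Suc j))"
    for i j
  define c where "c i = exp (- \<alpha> * grid u w m i)" for i
  define c' where "c' j = exp (- \<alpha> * grid u' w' m' j)" for j
  have k: "0 \<le> k i j" for i j
    unfolding k_def using uw(2) uw'(2) by (intro Za_incr_cov_nonneg grid_mono)
  have c: "exp (- \<alpha> * w) \<le> c i \<and> c i \<le> 1" if "i < Suc m" for i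
    using grid_upper[OF uw(2), of i m] grid_lower[OF uw(2), of m i] uw(1) that \<alpha>
    unfolding c_def by (auto simp: mult_le_0_iff)
  have c': "exp (- \<alpha> * w') \<le> c' j \<and> c' j \<le> exp (- \<alpha> * u')" if "j < Suc m'" for j
    using grid_upper[OF uw'(2), of j m'] grid_lower[OF uw'(2), of m' j] that \<alpha>
    unfolding c'_def by auto
  have cov: "(\<integral>\<omega>. grid_sum u w m \<omega> * grid_sum u' w' m' \<omega> \<partial>M) = (\<Sum>i<Suc m. \<Sum>j<Suc m'. c i * c' j * k i j)"
    unfolding grid_sum_cov(2) k_def c_def c'_def ..
  have "(\<Sum>i<Suc m. \<Sum>j<Suc m'. k i j)
      = (\<Sum>i<Suc m. fbm_incr_cov (2 * H) (a (grid u w m i)) (a (grid u w m (Suc i))) (a u') (a w'))"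
    unfolding k_def using fbm_incr_cov_telescope_right[where y="\<lambda>j. a (grid u' w' m' j)"] by simp
  also have "\<dots> = Za_incr_cov u w u' w'"
    using fbm_incr_cov_telescope_left[where x="\<lambda>i. a (grid u w m i)"] by simp
  finally have kernel: "(\<Sum>i<Suc m. \<Sum>j<Suc m'. k i j) = Za_incr_cov u w u' w'" .
  have "exp (- \<alpha> * w) * exp (- \<alpha> * w') * Za_incr_cov u w u' w'
      = (\<Sum>i<Suc m. \<Sum>j<Suc m'. exp (- \<alpha> * w) * exp (- \<alpha> * w') * k i j)"
    unfolding kernel[symmetric] by (simp only: sum_distrib_left)
  also have "\<dots> \<le> (\<Sum>i<Suc m. \<Sum>j<Suc m'. c i * c' j * k i j)"
    using c c' k by (intro sum_mono mult_right_mono mult_mono) (auto simp: c_def)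
  finally show "exp (- \<alpha> * w) * exp (- \<alpha> * w') * Za_incr_cov u w u' w'
      \<le> (\<integral>\<omega>. grid_sum u w m \<omega> * grid_sum u' w' m' \<omega> \<partial>M)"
    unfolding cov .
  have "(\<Sum>i<Suc m. \<Sum>j<Suc m'. c i * c' j * k i j) \<le> (\<Sum>i<Suc m. \<Sum>j<Suc m'. exp (- \<alpha> * u') * k i j)"
  proof (intro sum_mono mult_right_mono k)
    fix i j assume "i \<in> {..<Suc m}" "j \<in> {..<Suc m'}"
    then have "c i \<le> 1" "0 \<le> c' j" "c' j \<le> exp (- \<alpha> * u')" using c c' by (auto simp: c'_def)
    then show "c i * c' j \<le> exp (- \<alpha> * u')" using mult_right_mono[of "c i" 1 "c' j"] by simp
  qed
  also have "\<dots> = exp (- \<alpha> * u') * Za_incr_cov u w u' w'"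
    unfolding kernel[symmetric] by (simp only: sum_distrib_left)
  finally show "(\<integral>\<omega>. grid_sum u w m \<omega> * grid_sum u' w' m' \<omega> \<partial>M) \<le> exp (- \<alpha> * u') * Za_incr_cov u w u' w'"
    unfolding cov .
qed

lemma grid_sum_second_moment_le:
  assumes "0 \<le> u" "u \<le> w"
  shows "(\<integral>\<omega>. (grid_sum u w m \<omega>)\<^sup>2 \<partial>M) \<le> Za_incr_cov u w u w"
proof -
  have "(\<integral>\<omega>. (grid_sum u w m \<omega>)\<^sup>2 \<partial>M) \<le> exp (- \<alpha> * u) * Za_incr_cov u w u w"
    using grid_sum_cov_bounds(2)[OF assms assms, of m m] by (simp add: power2_eq_square)
  also have "\<dots> \<le> 1 * Za_incr_cov u w u w"
    using \<alpha> assms by (intro mult_right_mono Za_incr_cov_nonneg) auto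
  finally show ?thesis by simp
qed

text \<open>From the Gaussian fourth moments and \<open>(x y)\<^sup>2 \<le> (x\<^sup>4 + y\<^sup>4) / 2\<close>.\<close>
lemma grid_sum_product_square_le:
  assumes uw: "0 \<le> u" "u \<le> w" and uw': "0 \<le> u'" "u' \<le> w'"
  shows "integrable M (\<lambda>\<omega>. (grid_sum u w m \<omega> * grid_sum u' w' m \<omega>)\<^sup>2)"
    and "(\<integral>\<omega>. (grid_sum u w m \<omega> * grid_sum u' w' m \<omega>)\<^sup>2 \<partial>M)
           \<le> 3 / 2 * ((Za_incr_cov u w u w)\<^sup>2 + (Za_incr_cov u' w' u' w')\<^sup>2)"
proof -
  define S where "S = grid_sum u w m"
  define S' where "S' = grid_sum u' w' m"
  have pointwise: "(x * y)\<^sup>2 \<le> (x ^ 4 + y ^ 4) / 2" for x y :: real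
  proof -
    have "0 \<le> (x\<^sup>2 - y\<^sup>2)\<^sup>2" by simp
    then show ?thesis by (simp add: power2_eq_square algebra_simps power4_eq_xxxx)
  qed
  have quartic: "integrable M (\<lambda>\<omega>. ((S \<omega>) ^ 4 + (S' \<omega>) ^ 4) / 2)"
    unfolding S_def S'_def using grid_sum_fourth_moment(1) by simp
  show product: "integrable M (\<lambda>\<omega>. (grid_sum u w m \<omega> * grid_sum u' w' m \<omega>)\<^sup>2)"
    unfolding S_def[symmetric] S'_def[symmetric]
  proof (rule Bochner_Integration.integrable_bound[OF quartic])
    show "(\<lambda>\<omega>. (S \<omega> * S' \<omega>)\<^sup>2) \<in> borel_measurable M"
      using grid_sum_measurable unfolding S_def S'_def by measurable
    show "AE \<omega> in M. norm ((S \<omega> * S' \<omega>)\<^sup>2) \<le> norm (((S \<omega>) ^ 4 + (S' \<omega>) ^ 4) / 2)"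
      using pointwise by (intro AE_I2) simp
  qed
  have "(\<integral>\<omega>. (S \<omega> * S' \<omega>)\<^sup>2 \<partial>M) \<le> (\<integral>\<omega>. ((S \<omega>) ^ 4 + (S' \<omega>) ^ 4) / 2 \<partial>M)"
    using product quartic pointwise unfolding S_def S'_def by (intro integral_mono)
  also have "\<dots> = 3 / 2 * ((\<integral>\<omega>. (S \<omega>)\<^sup>2 \<partial>M)\<^sup>2 + (\<integral>\<omega>. (S' \<omega>)\<^sup>2 \<partial>M)\<^sup>2)"
    unfolding S_def S'_def using grid_sum_fourth_moment by simp
  also have "\<dots> \<le> 3 / 2 * ((Za_incr_cov u w u w)\<^sup>2 + (Za_incr_cov u' w' u' w')\<^sup>2)"
    unfolding S_def S'_def
    using grid_sum_second_moment_le[OF uw] grid_sum_second_moment_le[OF uw']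
    by (intro mult_left_mono add_mono power_mono integral_nonneg_AE) auto
  finally show "(\<integral>\<omega>. (grid_sum u w m \<omega> * grid_sum u' w' m \<omega>)\<^sup>2 \<partial>M)
      \<le> 3 / 2 * ((Za_incr_cov u w u w)\<^sup>2 + (Za_incr_cov u' w' u' w')\<^sup>2)"
    unfolding S_def S'_def .
qed

lemma increment_mean_zero:
  assumes uw: "0 \<le> u" "u \<le> w"
  shows "integrable M (\<lambda>\<omega>. Y w \<omega> - Y u \<omega>)" and "(\<integral>\<omega>. Y w \<omega> - Y u \<omega> \<partial>M) = 0"
proof -
  have L2: "integrable M (\<lambda>\<omega>. (grid_sum u w m \<omega>)\<^sup>2)" for m
    using grid_sum_cov(1)[of u w m u w m] by (simp add: power2_eq_square)
  have "(\<lambda>m. grid_sum u w m \<omega>) \<longlonglongrightarrow> Y w \<omega> - Y u \<omega>" if "\<omega> \<in> space M" for \<omega>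
    using grid_sum_tendsto[OF that uw] .
  note limit =
    L2_bounded_integral_tendsto[OF grid_sum_measurable this L2 grid_sum_second_moment_le[OF uw]]
  show "integrable M (\<lambda>\<omega>. Y w \<omega> - Y u \<omega>)" by (rule limit(1))
  show "(\<integral>\<omega>. Y w \<omega> - Y u \<omega> \<partial>M) = 0"
    using limit(2) by (simp add: grid_sum_mean LIMSEQ_const_iff)
qed

lemma increment_product_limit:
  assumes uw: "0 \<le> u" "u \<le> w" and uw': "0 \<le> u'" "u' \<le> w'"
  shows "integrable M (\<lambda>\<omega>. (Y w \<omega> - Y u \<omega>) * (Y w' \<omega> - Y u' \<omega>))"
    and "(\<lambda>m. \<integral>\<omega>. grid_sum u w m \<omega> * grid_sum u' w' m \<omega> \<partial>M) \<longlonglongrightarrow> increment_cov u w u' w'"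
proof -
  have "(\<lambda>m. grid_sum u w m \<omega> * grid_sum u' w' m \<omega>) \<longlonglongrightarrow> (Y w \<omega> - Y u \<omega>) * (Y w' \<omega> - Y u' \<omega>)"
    if "\<omega> \<in> space M" for \<omega>
    by (intro tendsto_mult grid_sum_tendsto that uw uw')
  note limit = L2_bounded_integral_tendsto[OF _ this grid_sum_product_square_le[OF uw uw']]
  show "integrable M (\<lambda>\<omega>. (Y w \<omega> - Y u \<omega>) * (Y w' \<omega> - Y u' \<omega>))"
    by (rule limit(1)) (use grid_sum_measurable in measurable)
  show "(\<lambda>m. \<integral>\<omega>. grid_sum u w m \<omega> * grid_sum u' w' m \<omega> \<partial>M) \<longlonglongrightarrow> increment_cov u w u' w'"
    unfolding increment_cov_def by (rule limit(2)) (use grid_sum_measurable in measurable)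
qed

lemma increment_cov_bounds:
  assumes "0 \<le> u" "u \<le> w" "0 \<le> u'" "u' \<le> w'"
  shows "exp (- \<alpha> * w) * exp (- \<alpha> * w') * Za_incr_cov u w u' w' \<le> increment_cov u w u' w'"
    and "increment_cov u w u' w' \<le> exp (- \<alpha> * u') * Za_incr_cov u w u' w'"
  using LIMSEQ_le_const[OF increment_product_limit(2)[OF assms]]
    LIMSEQ_le_const2[OF increment_product_limit(2)[OF assms]] grid_sum_cov_bounds[OF assms]
  by blast+

lemma increment_cov_pos:
  assumes "0 \<le> u" "u < w" "0 \<le> u'" "u' < w'"
  shows "increment_cov u w u' w' > 0"
proof -
  have "0 < Za_incr_cov u w u' w'"
    using assms by (intro fbm_incr_cov_pos one_lt_2H a_strict_mono)
  then have "0 < exp (- \<alpha> * w) * exp (- \<alpha> * w') * Za_incr_cov u w u' w'" by simp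
  also have "\<dots> \<le> increment_cov u w u' w'"
    using assms by (intro increment_cov_bounds(1)) auto
  finally show ?thesis .
qed

text \<open>Shifting time by \<open>s\<close> multiplies \<open>a\<close> by \<open>l = exp (\<alpha> * s / H)\<close>, hence the kernel by
  \<open>l powr (2 * H) = exp (2 * \<alpha> * s)\<close>, which the two exponential weights exactly compensate.\<close>
lemma grid_sum_cov_shift:
  "(\<integral>\<omega>. grid_sum (u + s) (w + s) m \<omega> * grid_sum (u' + s) (w' + s) m \<omega> \<partial>M) =
   (\<integral>\<omega>. grid_sum u w m \<omega> * grid_sum u' w' m \<omega> \<partial>M)"
proof -
  define l where "l = exp (\<alpha> * s / H)"
  have l: "l > 0" "l powr (2 * H) = exp (2 * \<alpha> * s)"
    unfolding l_def exp_powr_real using H by simp_all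
  have "exp (- \<alpha> * (x + s)) * exp (- \<alpha> * (y + s)) * Za_incr_cov (x0 + s) (x1 + s) (y0 + s) (y1 + s)
      = exp (- \<alpha> * x) * exp (- \<alpha> * y) * Za_incr_cov x0 x1 y0 y1" for x y x0 x1 y0 y1
  proof -
    have "exp (- \<alpha> * (x + s)) * exp (- \<alpha> * (y + s)) * exp (2 * \<alpha> * s) = exp (- \<alpha> * x) * exp (- \<alpha> * y)"
      by (simp only: mult_exp_exp) (simp add: algebra_simps)
    then show ?thesis
      unfolding a_shift l_def[symmetric] fbm_incr_cov_scale[OF l(1)] l(2) by (simp add: mult.assoc[symmetric])
  qed
  then show ?thesis unfolding grid_sum_cov(2) grid_shift by simp
qed

lemma increment_cov_shift:
  assumes "0 \<le> u" "u \<le> w" "0 \<le> u'" "u' \<le> w'" "0 \<le> s"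
  shows "increment_cov (u + s) (w + s) (u' + s) (w' + s) = increment_cov u w u' w'"
  using increment_product_limit(2)[of "u + s" "w + s" "u' + s" "w' + s"] assms
  unfolding grid_sum_cov_shift by (intro LIMSEQ_unique[OF _ increment_product_limit(2)]) auto

text \<open>By the mean value theorem the kernel is at most \<open>H * (a 1 - a 0) * a (n + 1) powr (2 * H - 1)\<close>,
  and \<open>exp (- \<alpha> * n) * a (n + 1) powr (2 * H - 1)\<close> is geometric in \<open>n\<close>.\<close>
lemma unit_increment_kernel_le:
  obtains C where "\<And>n. 1 \<le> n \<Longrightarrow>
    exp (- \<alpha> * real n) * Za_incr_cov 0 1 (real n) (real n + 1) \<le> C * exp (\<alpha> * (H - 1) / H) ^ n"
proof
  fix n :: nat assume "1 \<le> n"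
  define q where "q = 2 * H - 1"
  have q: "0 < q" unfolding q_def using H by simp
  have ord: "0 \<le> a 0" "a 0 \<le> a 1" "a 1 \<le> a (real n)" "a (real n) \<le> a (real n + 1)"
    using a_pos[of 0] \<open>1 \<le> n\<close> by (auto intro!: a_mono)
  have coeff: "0 \<le> (a 1 - a 0) * (2 * H) / 2" using ord H by simp
  have "(a (real n + 1) - a 0) powr q \<le> a (real n + 1) powr q"
    using ord a_pos[of 0] q by (intro powr_mono2) auto
  also have "\<dots> = ((H / \<alpha>) * exp (\<alpha> * (real n + 1) / H)) powr q"
    unfolding a_def by simp
  also have "\<dots> = (H / \<alpha>) powr q * exp (\<alpha> * (real n + 1) / H * q)"
    using H \<alpha> by (subst powr_mult) (auto simp: exp_powr_real)
  finally have powr_le: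
    "(a (real n + 1) - a 0) powr q \<le> (H / \<alpha>) powr q * exp (\<alpha> * (real n + 1) / H * q)" .
  have exps: "exp (- \<alpha> * real n) * exp (\<alpha> * (real n + 1) / H * q)
      = exp (\<alpha> * q / H) * exp (\<alpha> * (H - 1) / H) ^ n"
  proof -
    have "exp (- \<alpha> * real n) * exp (\<alpha> * (real n + 1) / H * q)
        = exp (\<alpha> * q / H + real n * (\<alpha> * (H - 1) / H))"
      by (simp only: mult_exp_exp) (use H in \<open>simp add: q_def field_simps\<close>)
    then show ?thesis by (simp only: exp_add exp_of_nat_mult)
  qed
  have "exp (- \<alpha> * real n) * Za_incr_cov 0 1 (real n) (real n + 1)
      \<le> exp (- \<alpha> * real n) * ((a 1 - a 0) * (2 * H) * (a (real n + 1) - a 0) powr q / 2)"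
    using fbm_incr_cov_le[OF one_lt_2H ord] unfolding q_def by (intro mult_left_mono) auto
  also have "\<dots> = (a 1 - a 0) * (2 * H) / 2 * (exp (- \<alpha> * real n) * (a (real n + 1) - a 0) powr q)"
    by simp
  also have "\<dots> \<le> (a 1 - a 0) * (2 * H) / 2
      * (exp (- \<alpha> * real n) * ((H / \<alpha>) powr q * exp (\<alpha> * (real n + 1) / H * q)))"
    using powr_le coeff by (intro mult_left_mono) auto
  also have "\<dots> = (a 1 - a 0) * (2 * H) * (H / \<alpha>) powr q * exp (\<alpha> * q / H) / 2
      * exp (\<alpha> * (H - 1) / H) ^ n"
    using exps by (simp add: algebra_simps)
  finally show "exp (- \<alpha> * real n) * Za_incr_cov 0 1 (real n) (real n + 1)
      \<le> (a 1 - a 0) * (2 * H) * (H / \<alpha>) powr q * exp (\<alpha> * q / H) / 2 * exp (\<alpha> * (H - 1) / H) ^ n" .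
qed

lemma summable_unit_increment_cov: "summable (\<lambda>n. increment_cov 0 1 (real n) (real n + 1))"
proof -
  obtain C where C: "\<And>n. 1 \<le> n \<Longrightarrow>
      exp (- \<alpha> * real n) * Za_incr_cov 0 1 (real n) (real n + 1) \<le> C * exp (\<alpha> * (H - 1) / H) ^ n"
    using unit_increment_kernel_le by blast
  show ?thesis
  proof (rule summable_comparison_test'[where N=1])
    have "exp (\<alpha> * (H - 1) / H) < 1" using H \<alpha> by (simp add: mult_pos_neg divide_neg_pos)
    then show "summable (\<lambda>n. C * exp (\<alpha> * (H - 1) / H) ^ n)"
      by (intro summable_mult summable_geometric) simp
    fix n :: nat assume "1 \<le> n"
    have "0 \<le> increment_cov 0 1 (real n) (real n + 1)"
      using increment_cov_pos[of 0 1 "real n" "real n + 1"] by simp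
    moreover have "increment_cov 0 1 (real n) (real n + 1)
        \<le> exp (- \<alpha> * real n) * Za_incr_cov 0 1 (real n) (real n + 1)"
      by (rule increment_cov_bounds(2)) auto
    ultimately show "norm (increment_cov 0 1 (real n) (real n + 1)) \<le> C * exp (\<alpha> * (H - 1) / H) ^ n"
      using C[OF \<open>1 \<le> n\<close>] by simp
  qed
qed

end

theorem corollary3p1:
  fixes M :: "'a measure" and H \<alpha> :: real and Z :: "real \<Rightarrow> 'a \<Rightarrow> real"
    and a :: "real \<Rightarrow> real" and Y :: "real \<Rightarrow> 'a \<Rightarrow> real" and I :: "nat \<Rightarrow> 'a \<Rightarrow> real"
  assumes H: "1/2 < H" "H < 1"
    and fBm: "continuous_fBm M H Z"
    and \<alpha>: "\<alpha> > 0"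
    and a_def: "\<And>t. a t = H * exp (\<alpha> * t / H) / \<alpha>"
    and Y_def: "\<And>t \<omega>. Y t \<omega> = RS_integral (\<lambda>s. exp (- \<alpha> * s)) (\<lambda>s. Z (a s) \<omega>) 0 t"
    and I_def: "\<And>n \<omega>. I n \<omega> = Y (real n + 1) \<omega> - Y (real n) \<omega>"
  shows "(\<forall>t1 t2 s1 s2. 0 \<le> t1 \<and> t1 < t2 \<and> 0 \<le> s1 \<and> s1 < s2 \<longrightarrow>
            (\<integral>\<omega>. (Y t2 \<omega> - Y t1 \<omega>) * (Y s2 \<omega> - Y s1 \<omega>) \<partial>M) > 0)
       \<and> (\<forall>n. integrable M (I n) \<and> (\<integral>\<omega>. I n \<omega> \<partial>M) = 0)
       \<and> (\<forall>i n. integrable M (\<lambda>\<omega>. I i \<omega> * I (i + n) \<omega>) \<and>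
              (\<integral>\<omega>. I i \<omega> * I (i + n) \<omega> \<partial>M) = (\<integral>\<omega>. I 0 \<omega> * I n \<omega> \<partial>M))
       \<and> convergent (\<lambda>k. \<Sum>n\<le>k. (\<integral>\<omega>. I 0 \<omega> * I n \<omega> \<partial>M))"
proof -
  interpret time_changed_fBm_integral M H \<alpha> Z a Y
    using H fBm \<alpha> a_def Y_def by unfold_locales
  have I: "I n = (\<lambda>\<omega>. Y (real n + 1) \<omega> - Y (real n) \<omega>)" for n
    using I_def by blast
  have cov_I: "(\<integral>\<omega>. I i \<omega> * I j \<omega> \<partial>M) = increment_cov (real i) (real i + 1) (real j) (real j + 1)" for i j
    unfolding I increment_cov_def ..
  show ?thesis
  proof (intro conjI allI impI)
    fix t1 t2 s1 s2 :: real
    assume "0 \<le> t1 \<and> t1 < t2 \<and> 0 \<le> s1 \<and> s1 < s2"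
    then show "(\<integral>\<omega>. (Y t2 \<omega> - Y t1 \<omega>) * (Y s2 \<omega> - Y s1 \<omega>) \<partial>M) > 0"
      using increment_cov_pos[of t1 t2 s1 s2] unfolding increment_cov_def by blast
  next
    fix n
    show "integrable M (I n)" "(\<integral>\<omega>. I n \<omega> \<partial>M) = 0"
      unfolding I using increment_mean_zero[of "real n" "real n + 1"] by auto
  next
    fix i n
    show "integrable M (\<lambda>\<omega>. I i \<omega> * I (i + n) \<omega>)"
      unfolding I using increment_product_limit(1)[of "real i" "real i + 1" "real (i + n)"] by simp
    show "(\<integral>\<omega>. I i \<omega> * I (i + n) \<omega> \<partial>M) = (\<integral>\<omega>. I 0 \<omega> * I n \<omega> \<partial>M)"
      unfolding cov_I using increment_cov_shift[of 0 1 "real n" "real n + 1" "real i"] by (simp add: add_ac)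
  next
    show "convergent (\<lambda>k. \<Sum>n\<le>k. (\<integral>\<omega>. I 0 \<omega> * I n \<omega> \<partial>M))"
      unfolding cov_I using summable_unit_increment_cov by (simp add: summable_iff_convergent')
  qed
qed

end
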